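(* Consider the problem and algorithm AC2CD described in the context, let $\{x^k\}$ be a sequence produced by AC2CD, and assume $\lim_{k\to\infty}x^k=x^*$. Let $D^*_{\max}=\max_{i=1,\dots,n}D_i(x^* )$ (which is positive) and let $k_j$ be the first outer iteration such that \[ \|x^k-x^*\|_\infty<\frac{\tau}{\tau+1}D^*_{\max}\quad\text{for all } k\ge k_j. \] Then for all $k\ge k_j$, $j(k)\notin \mathcal A(x^* )$, where $\mathcal A(x^* )=\{i: x^*_i=l_i\}\cup\{i: x^*_i=u_i\}$.
   Context: Problem: minimize $f(x)$ subject to $e^T x = b$ and $l_i \le x_i \le u_i$ ($i=1,\dots,n$), where $n\ge 2$, $e$ is the all-ones vector, $b\in\mathbb{R}$, $l_i\in\mathbb{R}\cup\{-\infty\}$, $u_i\in\mathbb{R}\cup\{+\infty\}$, $l_i<u_i$, and $f:\mathbb{R}^n\to\mathbb{R}$ is continuously differentiable with $\nabla f$ Lipschitz continuous on $\mathbb{R}^n$. $\mathcal F$ is the feasible set, $e_i$ the $i$th unit vector. For $x\in\mathcal F$, $D_h(x)=\min\{x_h-l_h,u_h-x_h\}$. Algorithm AC2CD with parameters $\tau\in(0,1]$, $\gamma,\delta\in(0,1)$, $0<A_l\le A_u<\infty$ and starting point $x^0\in\mathcal F$: for $k=0,1,2,\dots$: let $D^k=\max_h D_h(x^k)$; choose $j(k)$ with $D_{j(k)}(x^k)\ge\tau D^k$; choose a permutation $(p^k_1,\dots,p^k_n)$ of $\{1,\dots,n\}$; set $z^{k,1}=x^k$; for $i=1,\dots,n$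 (inner iteration $(k,i)$): $g^{k,i}=\nabla_{j(k)}f(z^{k,i})-\nabla_{p^k_i}f(z^{k,i})$, $d^{k,i}=g^{k,i}(e_{p^k_i}-e_{j(k)})$; $\bar\alpha^{k,i}=\min\{u_{p^k_i}-z^{k,i}_{p^k_i},z^{k,i}_{j(k)}-l_{j(k)}\}/g^{k,i}$ if $g^{k,i}>0$, $=\min\{z^{k,i}_{p^k_i}-l_{p^k_i},u_{j(k)}-z^{k,i}_{j(k)}\}/|g^{k,i}|$ if $g^{k,i}<0$, $=0$ if $g^{k,i}=0$; choose $A^{k,i}\in[A_l,A_u]$, set $\Delta^{k,i}=\min\{\bar\alpha^{k,i},A^{k,i}\}$; starting from $\alpha=\Delta^{k,i}$, while $f(z^{k,i}+\alpha d^{k,i})>f(z^{k,i})+\gamma\alpha\nabla f(z^{k,i})^Td^{k,i}$ replace $\alpha$ by $\delta\alpha$; $\alpha^{k,i}$ is the final $\alpha$ and $z^{k,i+1}=z^{k,i}+\alpha^{k,i}d^{k,i}$. Then $x^{k+1}=z^{k,n+1}$. Standing assumptions: $\mathcal L_0=\{x\in\mathcal F: f(x)\le f(x^0)\}$ is nonempty and compact, and every $x\in\mathcal L_0$ has some index $i$ with $l_i<x_i<u_i$. *)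

theory Defs
  imports "HOL-Analysis.Analysis" "HOL-Library.Extended_Real"
begin

text \<open>Vectors in R^n are modelled as real^'n with n = CARD('n).
  Bounds l_i in R \<union> {-\<infinity>}, u_i in R \<union> {+\<infinity>} are extended reals.\<close>

definition feasible :: "('n::finite \<Rightarrow> ereal) \<Rightarrow> ('n \<Rightarrow> ereal) \<Rightarrow> real \<Rightarrow> real^'n \<Rightarrow> bool" where
  "feasible l u b x \<longleftrightarrow> (\<Sum>i\<in>UNIV. x$i) = b \<and> (\<forall>i. l i \<le> ereal (x$i) \<and> ereal (x$i) \<le> u i)"

definition Dh :: "('n::finite \<Rightarrow> ereal) \<Rightarrow> ('n \<Rightarrow> ereal) \<Rightarrow> real^'n \<Rightarrow> 'n \<Rightarrow> ereal" where
  "Dh l u x h = min (ereal (x$h) - l h) (u h - ereal (x$h))"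

definition Dmax :: "('n::finite \<Rightarrow> ereal) \<Rightarrow> ('n \<Rightarrow> ereal) \<Rightarrow> real^'n \<Rightarrow> ereal" where
  "Dmax l u x = Max (range (\<lambda>h. Dh l u x h))"

definition active_set :: "('n::finite \<Rightarrow> ereal) \<Rightarrow> ('n \<Rightarrow> ereal) \<Rightarrow> real^'n \<Rightarrow> 'n set" where
  "active_set l u x = {i. ereal (x$i) = l i} \<union> {i. ereal (x$i) = u i}"

definition norm_inf :: "real^'n::finite \<Rightarrow> real" where
  "norm_inf v = Max (range (\<lambda>i. \<bar>v$i\<bar>))"

text \<open>Maximum feasible stepsize along d = g (e_p - e_j).\<close>
definition alpha_bar :: "('n::finite \<Rightarrow> ereal) \<Rightarrow> ('n \<Rightarrow> ereal) \<Rightarrow> real^'n \<Rightarrow> 'n \<Rightarrow> 'n \<Rightarrow> real \<Rightarrow> ereal" where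
  "alpha_bar l u z p j g =
     (if g > 0 then min (u p - ereal (z$p)) (ereal (z$j) - l j) / ereal g
      else if g < 0 then min (ereal (z$p) - l p) (u j - ereal (z$j)) / ereal \<bar>g\<bar>
      else 0)"

definition armijo :: "(real^'n \<Rightarrow> real) \<Rightarrow> (real^'n \<Rightarrow> real^'n) \<Rightarrow> real \<Rightarrow> real^'n \<Rightarrow> real^'n \<Rightarrow> real \<Rightarrow> bool" where
  "armijo f grad \<gamma> z d a \<longleftrightarrow> f (z + a *\<^sub>R d) \<le> f z + \<gamma> * a * (grad z \<bullet> d)"

definition ac2cd_run ::
  "(real^'n::finite \<Rightarrow> real) \<Rightarrow> (real^'n \<Rightarrow> real^'n) \<Rightarrow> ('n \<Rightarrow> ereal) \<Rightarrow> ('n \<Rightarrow> ereal) \<Rightarrow>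
   real \<Rightarrow> real \<Rightarrow> real \<Rightarrow> real \<Rightarrow> real \<Rightarrow>
   (nat \<Rightarrow> real^'n) \<Rightarrow> (nat \<Rightarrow> 'n) \<Rightarrow> (nat \<Rightarrow> nat \<Rightarrow> 'n) \<Rightarrow> (nat \<Rightarrow> nat \<Rightarrow> real^'n) \<Rightarrow>
   (nat \<Rightarrow> nat \<Rightarrow> real) \<Rightarrow> (nat \<Rightarrow> nat \<Rightarrow> real) \<Rightarrow> bool" where
  "ac2cd_run f grad l u \<tau> \<gamma> \<delta> Al Au x j p z A \<alpha> \<longleftrightarrow>
    (\<forall>k.
       Dh l u (x k) (j k) \<ge> ereal \<tau> * Dmax l u (x k)
     \<and> bij_betw (p k) {1..CARD('n)} UNIV
     \<and> z k 1 = x k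
     \<and> x (Suc k) = z k (CARD('n) + 1)
     \<and> (\<forall>i\<in>{1..CARD('n)}.
          let g = grad (z k i) $ (j k) - grad (z k i) $ (p k i);
              d = g *\<^sub>R (axis (p k i) 1 - axis (j k) 1);
              \<Delta> = real_of_ereal (min (alpha_bar l u (z k i) (p k i) (j k) g) (ereal (A k i)))
          in A k i \<in> {Al..Au}
           \<and> (\<exists>m::nat. \<alpha> k i = \<Delta> * \<delta> ^ m \<and> armijo f grad \<gamma> (z k i) d (\<alpha> k i)
                 \<and> (\<forall>m'<m. \<not> armijo f grad \<gamma> (z k i) d (\<Delta> * \<delta> ^ m')))
           \<and> z k (i + 1) = z k i + \<alpha> k i *\<^sub>R d))"

end

theory Submission
  imports Defs
begin

(* Each inner iteration moves mass between two coordinates by at most the maximal feasible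
   stepsize, and along its direction the directional derivative is -g^2 <= 0, so the Armijo
   condition makes f nonincreasing. Hence all iterates lie in the compact level set L0, so does
   their limit x*, and the interior-point assumption gives D*max > 0.
   If j(k) were active at x* and e = ||x^k - x*||_inf, then D_j(k)(x^k) <= e. On the other hand
   D_h is 1-Lipschitz in the infinity norm, so the choice of j(k) gives
   D_j(k)(x^k) >= tau Dmax(x^k) >= tau (D*max - e). Together e >= tau/(tau+1) D*max,
   contradicting the choice of k_j. *)

lemma shift_mass_nth:
  fixes z :: "real^'n::finite"
  shows "(z + t *\<^sub>R (axis p 1 - axis j 1)) $ h = z$h + (if h = p then t else 0) - (if h = j then t else 0)"
  by (simp add: axis_def)

lemma feasible_shift_mass:
  fixes z :: "real^'n::finite"
  assumes z: "feasible l u b z" and t: "0 \<le> t"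
    and p: "ereal t \<le> u p - ereal (z$p)" and j: "ereal t \<le> ereal (z$j) - l j"
  shows "feasible l u b (z + t *\<^sub>R (axis p 1 - axis j 1))"
proof (cases "p = j")
  case True
  then show ?thesis using z by simp
next
  case False
  have bounds: "l h \<le> ereal (z$h)" "ereal (z$h) \<le> u h" for h
    using z by (auto simp: feasible_def)
  have "ereal (z$p + t) \<le> u p"
    using p by (cases "u p") auto
  moreover have "l j \<le> ereal (z$j - t)"
    using j by (cases "l j") auto
  moreover have "l p \<le> ereal (z$p + t)"
    using bounds(1)[of p] t by (auto intro: order_trans)
  moreover have "ereal (z$j - t) \<le> u j"
    using bounds(2)[of j] t by (auto intro: order_trans[rotated])
  ultimately show ?thesis
    using z False bounds unfolding feasible_def shift_mass_nth
    by (auto simp: sum.distrib sum_subtractf)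
qed

lemma ereal_mult_le_if_le_divide:
  fixes M :: ereal
  assumes "0 < c" "ereal a \<le> M / ereal c"
  shows "ereal (a * c) \<le> M"
  using assms ereal_le_divide_pos[of "ereal c" "ereal a" M] by (simp add: mult.commute)

lemma scaleR_axis_diff_neg:
  assumes "g < 0"
  shows "a *\<^sub>R (g *\<^sub>R (axis p 1 - axis j 1)) = (a * \<bar>g\<bar>) *\<^sub>R (axis j 1 - axis p 1 :: real^'n)"
  using assms by (simp add: algebra_simps)

lemma feasible_coord_step:
  fixes z :: "real^'n::finite"
  assumes z: "feasible l u b z" and a: "0 \<le> a" "ereal a \<le> alpha_bar l u z p j g"
  shows "feasible l u b (z + a *\<^sub>R (g *\<^sub>R (axis p 1 - axis j 1)))"
proof -
  consider "g > 0" | "g < 0" | "g = 0" by linarith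
  then show ?thesis
  proof cases
    case 1
    then have "ereal (a * g) \<le> min (u p - ereal (z$p)) (ereal (z$j) - l j)"
      using a by (intro ereal_mult_le_if_le_divide) (auto simp: alpha_bar_def)
    then show ?thesis
      using feasible_shift_mass[OF z, of "a * g" p j] a 1 by simp
  next
    case 2
    then have "ereal (a * \<bar>g\<bar>) \<le> min (u j - ereal (z$j)) (ereal (z$p) - l p)"
      using a by (intro ereal_mult_le_if_le_divide) (auto simp: alpha_bar_def min.commute)
    then show ?thesis
      unfolding scaleR_axis_diff_neg[OF 2] using feasible_shift_mass[OF z, of "a * \<bar>g\<bar>" j p] a by simp
  next
    case 3
    then show ?thesis using z by simp
  qed
qed

lemma alpha_bar_nonneg:
  fixes z :: "real^'n::finite"
  assumes "feasible l u b z"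
  shows "0 \<le> alpha_bar l u z p j g"
proof -
  have "l h \<le> ereal (z$h)" "ereal (z$h) \<le> u h" for h
    using assms by (auto simp: feasible_def)
  then have "0 \<le> u h - ereal (z$h)" "0 \<le> ereal (z$h) - l h" for h
    by (simp_all add: ereal_diff_positive)
  then show ?thesis
    by (auto simp: alpha_bar_def ereal_le_divide_pos)
qed

lemma inner_coord_direction:
  fixes G :: "real^'n::finite"
  shows "G \<bullet> ((G$j - G$p) *\<^sub>R (axis p 1 - axis j 1)) = - (G$j - G$p)\<^sup>2"
  by (simp add: inner_diff_right inner_axis power2_eq_square algebra_simps)

lemma armijo_descent:
  assumes "armijo f grad \<gamma> z d a" "0 \<le> \<gamma>" "0 \<le> a" "grad z \<bullet> d \<le> 0"
  shows "f (z + a *\<^sub>R d) \<le> f z"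
proof -
  have "\<gamma> * a * (grad z \<bullet> d) \<le> 0"
    using assms(2-4) by (simp add: mult_nonneg_nonpos)
  then show ?thesis
    using assms(1) unfolding armijo_def by linarith
qed

lemma backtracking_stepsize_bounds:
  fixes M :: ereal and m :: nat
  assumes "0 \<le> M" "0 \<le> A" "0 \<le> \<delta>" "\<delta> \<le> 1"
  defines "\<Delta> \<equiv> real_of_ereal (min M (ereal A))"
  shows "0 \<le> \<Delta> * \<delta> ^ m" and "ereal (\<Delta> * \<delta> ^ m) \<le> M"
proof -
  have \<Delta>: "min M (ereal A) = ereal \<Delta>" "0 \<le> \<Delta>"
    using assms(1,2) unfolding \<Delta>_def by (cases M; simp add: min_def)+
  have "\<delta> ^ m \<le> 1"
    using assms(3,4) by (simp add: power_le_one)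
  then have "0 \<le> \<Delta> * \<delta> ^ m" "\<Delta> * \<delta> ^ m \<le> \<Delta>"
    using \<Delta>(2) assms(3) by (auto simp: mult_left_le)
  moreover have "ereal \<Delta> \<le> M"
    using \<Delta>(1) by (metis min.cobounded1)
  ultimately show "0 \<le> \<Delta> * \<delta> ^ m" "ereal (\<Delta> * \<delta> ^ m) \<le> M"
    by (auto intro: order_trans[rotated])
qed

lemma ac2cd_inner_step:
  assumes run: "ac2cd_run f grad l u \<tau> \<gamma> \<delta> Al Au x j p z A \<alpha>"
    and "0 < Al" "0 < \<delta>" "\<delta> < 1" "0 < \<gamma>"
    and i: "i \<in> {1..CARD('n::finite)}" and z: "feasible l u b (z k i :: real^'n)"
  shows "feasible l u b (z k (i + 1)) \<and> f (z k (i + 1)) \<le> f (z k i)"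
proof -
  define G where "G = grad (z k i)"
  define g where "g = G $ j k - G $ p k i"
  define d :: "real^'n" where "d = g *\<^sub>R (axis (p k i) 1 - axis (j k) 1)"
  define \<Delta> where "\<Delta> = real_of_ereal (min (alpha_bar l u (z k i) (p k i) (j k) g) (ereal (A k i)))"
  obtain m where A: "A k i \<in> {Al..Au}" and \<alpha>: "\<alpha> k i = \<Delta> * \<delta> ^ m"
    and arm: "armijo f grad \<gamma> (z k i) d (\<alpha> k i)" and step: "z k (i + 1) = z k i + \<alpha> k i *\<^sub>R d"
    using run i unfolding ac2cd_run_def Let_def G_def g_def d_def \<Delta>_def by blast
  have "0 \<le> \<alpha> k i" "ereal (\<alpha> k i) \<le> alpha_bar l u (z k i) (p k i) (j k) g"
    using backtracking_stepsize_bounds[OF alpha_bar_nonneg[OF z], of "A k i" \<delta>] A assms(2-4)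
    unfolding \<alpha> \<Delta>_def by auto
  moreover have "grad (z k i) \<bullet> d \<le> 0"
    using inner_coord_direction[of G "j k" "p k i"] unfolding d_def g_def G_def by simp
  ultimately show ?thesis
    using feasible_coord_step[OF z] armijo_descent[OF arm] assms(5)
    unfolding step d_def by simp
qed

lemma ac2cd_outer_step:
  assumes run: "ac2cd_run f grad l u \<tau> \<gamma> \<delta> Al Au x j p z A \<alpha>"
    and params: "0 < Al" "0 < \<delta>" "\<delta> < 1" "0 < \<gamma>"
    and x: "feasible l u b (x k :: real^'n::finite)"
  shows "feasible l u b (x (Suc k)) \<and> f (x (Suc k)) \<le> f (x k)"
proof -
  have "feasible l u b (z k (Suc i)) \<and> f (z k (Suc i)) \<le> f (x k)" if "i \<le> CARD('n)" for i
    using that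
  proof (induction i)
    case 0
    then show ?case using run x by (simp add: ac2cd_run_def)
  next
    case (Suc i)
    then have "feasible l u b (z k (Suc i + 1)) \<and> f (z k (Suc i + 1)) \<le> f (z k (Suc i))"
      by (intro ac2cd_inner_step[OF run params]) auto
    then show ?case using Suc by simp
  qed
  then show ?thesis
    using run by (simp add: ac2cd_run_def)
qed

lemma ac2cd_iterates_in_sublevel_set:
  assumes run: "ac2cd_run f grad l u \<tau> \<gamma> \<delta> Al Au x j p z A \<alpha>"
    and params: "0 < Al" "0 < \<delta>" "\<delta> < 1" "0 < \<gamma>"
    and x0: "feasible l u b (x 0 :: real^'n::finite)"
  shows "feasible l u b (x k) \<and> f (x k) \<le> f (x 0)"
proof (induction k)
  case 0
  then show ?case using x0 by simp
next
  case (Suc k)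
  then show ?case using ac2cd_outer_step[OF run params, of b k] by auto
qed

lemma abs_nth_le_norm_inf: "\<bar>v$i\<bar> \<le> norm_inf v"
  unfolding norm_inf_def by (rule Max_ge) auto

lemma norm_inf_le_norm: "norm_inf v \<le> norm v"
  unfolding norm_inf_def by (auto simp: component_le_norm_cart)

lemma Dh_le_Dmax: "Dh l u y h \<le> Dmax l u y"
  unfolding Dmax_def by (rule Max_ge) auto

lemma Dmax_attained: "\<exists>h. Dh l u y h = Dmax l u y"
proof -
  have "Max (range (Dh l u y)) \<in> range (Dh l u y)"
    by (rule Max_in) auto
  then show ?thesis
    unfolding Dmax_def by (metis rangeE)
qed

lemma Dmax_pos:
  assumes "l h < ereal (y$h)" "ereal (y$h) < u h"
  shows "0 < Dmax l u y"
proof -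
  have "0 < Dh l u y h"
    using assms unfolding Dh_def by (cases "l h"; cases "u h") (auto simp: min_def)
  then show ?thesis
    using Dh_le_Dmax by (rule less_le_trans)
qed

lemma Dh_le_dist_if_active:
  assumes "h \<in> active_set l u x"
  shows "Dh l u y h \<le> ereal \<bar>y$h - x$h\<bar>"
  using assms unfolding Dh_def active_set_def by (cases "l h"; cases "u h") (auto simp: min_le_iff_disj)

lemma Dh_minus_dist_le:
  assumes "l h \<noteq> \<infinity>" "u h \<noteq> -\<infinity>"
  shows "Dh l u x h - ereal \<bar>y$h - x$h\<bar> \<le> Dh l u y h"
  using assms unfolding Dh_def by (cases "l h"; cases "u h") (auto simp: abs_real_def min_def)

lemma Dmax_minus_norm_inf_le:
  assumes "\<forall>i. l i \<noteq> \<infinity>" "\<forall>i. u i \<noteq> -\<infinity>"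
  shows "Dmax l u x - ereal (norm_inf (y - x)) \<le> Dmax l u y"
proof -
  obtain h where h: "Dh l u x h = Dmax l u x"
    using Dmax_attained by blast
  have "Dmax l u x - ereal (norm_inf (y - x)) \<le> Dh l u x h - ereal \<bar>y$h - x$h\<bar>"
    using abs_nth_le_norm_inf[of "y - x" h] unfolding h by (intro ereal_minus_mono) auto
  also have "\<dots> \<le> Dh l u y h"
    using assms by (intro Dh_minus_dist_le) auto
  also have "\<dots> \<le> Dmax l u y"
    by (rule Dh_le_Dmax)
  finally show ?thesis .
qed

lemma selected_index_not_active:
  assumes bounds: "\<forall>i. l i \<noteq> \<infinity>" "\<forall>i. u i \<noteq> -\<infinity>" and \<tau>: "0 < \<tau>"
    and sel: "ereal \<tau> * Dmax l u y \<le> Dh l u y i"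
    and close: "ereal (norm_inf (y - x)) < ereal (\<tau> / (\<tau> + 1)) * Dmax l u x"
  shows "i \<notin> active_set l u x"
proof
  assume active: "i \<in> active_set l u x"
  define e where "e = norm_inf (y - x)"
  have "ereal \<tau> * (Dmax l u x - ereal e) \<le> ereal \<tau> * Dmax l u y"
    using Dmax_minus_norm_inf_le[OF bounds] \<tau> unfolding e_def by (intro ereal_mult_left_mono) auto
  also have "\<dots> \<le> Dh l u y i"
    by (rule sel)
  also have "\<dots> \<le> ereal \<bar>y$i - x$i\<bar>"
    by (rule Dh_le_dist_if_active[OF active])
  also have "\<dots> \<le> ereal e"
    using abs_nth_le_norm_inf[of "y - x" i] unfolding e_def by simp
  finally have contracted: "ereal \<tau> * (Dmax l u x - ereal e) \<le> ereal e" .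
  show False
  proof (cases "Dmax l u x")
    case (real D)
    have "\<tau> * (D - e) \<le> e" "e < \<tau> / (\<tau> + 1) * D"
      using contracted close unfolding real e_def by auto
    then show False
      using \<tau> by (simp add: field_simps)
  qed (use contracted close \<tau> in auto) \<comment> \<open>if Dmax l u x = \<infinity>, contracted bounds \<infinity> by a real\<close>
qed

lemma eventually_norm_inf_less:
  fixes x :: "nat \<Rightarrow> real^'n::finite"
  assumes "x \<longlonglongrightarrow> x'" "0 < c"
  shows "\<exists>k0. \<forall>k\<ge>k0. ereal (norm_inf (x k - x')) < c"
proof (cases c)
  case (real r)
  obtain k0 where "\<forall>k\<ge>k0. norm (x k - x') < r"
    using LIMSEQ_D[OF assms(1)] assms(2) real by auto
  then have "\<forall>k\<ge>k0. norm_inf (x k - x') < r"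
    using norm_inf_le_norm le_less_trans by blast
  then show ?thesis
    using real by auto
qed (use assms(2) in auto)

theorem proposition1:
  fixes f :: "real^'n::finite \<Rightarrow> real"
    and grad :: "real^'n \<Rightarrow> real^'n"
    and l u :: "'n \<Rightarrow> ereal" and b :: real
    and \<tau> \<gamma> \<delta> Al Au :: real
    and x :: "nat \<Rightarrow> real^'n" and j :: "nat \<Rightarrow> 'n" and p :: "nat \<Rightarrow> nat \<Rightarrow> 'n"
    and z :: "nat \<Rightarrow> nat \<Rightarrow> real^'n" and A \<alpha> :: "nat \<Rightarrow> nat \<Rightarrow> real"
    and xstar :: "real^'n"
  assumes n2: "CARD('n) \<ge> 2"
    and lbound: "\<forall>i. l i \<noteq> \<infinity>" and ubound: "\<forall>i. u i \<noteq> -\<infinity>"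
    and lu: "\<forall>i. l i < u i"
    and grad: "\<forall>y. (f has_derivative (\<lambda>h. grad y \<bullet> h)) (at y)"
    and grad_cont: "continuous_on UNIV grad"
    and grad_lip: "\<exists>L. \<forall>y y'. norm (grad y - grad y') \<le> L * norm (y - y')"
    and tau: "0 < \<tau>" "\<tau> \<le> 1"
    and gamma: "0 < \<gamma>" "\<gamma> < 1"
    and delta: "0 < \<delta>" "\<delta> < 1"
    and Abds: "0 < Al" "Al \<le> Au"
    and x0: "feasible l u b (x 0)"
    and L0_ne: "{y. feasible l u b y \<and> f y \<le> f (x 0)} \<noteq> {}"
    and L0_compact: "compact {y. feasible l u b y \<and> f y \<le> f (x 0)}"
    and L0_interior: "\<forall>y\<in>{y. feasible l u b y \<and> f y \<le> f (x 0)}. \<exists>i. l i < ereal (y$i) \<and> ereal (y$i) < u i"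
    and run: "ac2cd_run f grad l u \<tau> \<gamma> \<delta> Al Au x j p z A \<alpha>"
    and lim: "x \<longlonglongrightarrow> xstar"
  shows "Dmax l u xstar > 0 \<and>
    (\<forall>k \<ge> (LEAST k0. \<forall>k\<ge>k0. ereal (norm_inf (x k - xstar)) < ereal (\<tau> / (\<tau> + 1)) * Dmax l u xstar).
       j k \<notin> active_set l u xstar)"
proof -
  have params: "0 < Al" "0 < \<delta>" "\<delta> < 1" "0 < \<gamma>"
    using Abds delta gamma by auto
  have "xstar \<in> {y. feasible l u b y \<and> f y \<le> f (x 0)}"
    using closed_sequentially[OF compact_imp_closed[OF L0_compact] _ lim]
      ac2cd_iterates_in_sublevel_set[OF run params x0] by blast
  then obtain h where "l h < ereal (xstar$h)" "ereal (xstar$h) < u h"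
    using L0_interior by blast
  then have Dmax_xstar: "0 < Dmax l u xstar"
    by (rule Dmax_pos)
  define c where "c = ereal (\<tau> / (\<tau> + 1)) * Dmax l u xstar"
  have "0 < c"
    unfolding c_def using tau Dmax_xstar by (simp add: ereal_zero_less_0_iff)
  then have "\<exists>k0. \<forall>k\<ge>k0. ereal (norm_inf (x k - xstar)) < c"
    by (rule eventually_norm_inf_less[OF lim])
  then have close: "\<forall>k\<ge>(LEAST k0. \<forall>k\<ge>k0. ereal (norm_inf (x k - xstar)) < c).
      ereal (norm_inf (x k - xstar)) < c"
    by (rule LeastI_ex)
  have selected: "ereal \<tau> * Dmax l u (x k) \<le> Dh l u (x k) (j k)" for k
    using run by (simp add: ac2cd_run_def)
  show ?thesis
    using Dmax_xstar close selected_index_not_active[OF lbound ubound tau(1) selected]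
    unfolding c_def by blast
qed

end
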